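(* Let $f\colon\prod_{i\in[n]}X_i\to Y$ satisfy condition (BC), let $\varphi_k\colon X_k\to Y$ ($k\in[n]$) be maps satisfying the boundary condition, and let $p\colon Y^n\to Y$ be a polynomial function. Put $a_k=\varphi_k(0_{X_k})$, $b_k=\varphi_k(1_{X_k})$, and define the polynomial functions $$p^-(\mathbf{y})=\bigvee_{I\subseteq[n]}\Big(c_I^-\wedge\bigwedge_{i\in I}y_i\Big),\quad c_I^-=\operatorname{cl}\Big(f(\widehat{\mathbf{1}}_I)\wedge\bigwedge_{i\notin I}\overline{a_i}\Big),$$ $$p^+(\mathbf{y})=\bigvee_{I\subseteq[n]}\Big(c_I^+\wedge\bigwedge_{i\in I}y_i\Big),\quad c_I^+=\operatorname{int}\Big(f(\widehat{\mathbf{1}}_I)\vee\bigvee_{i\in I}\overline{b_i}\Big).$$ Then $f(\mathbf{x})=p(\varphi_1(x_1),\ldots,\varphi_n(x_n))$ for all $\mathbf{x}\in\prod_{i\in[n]}X_i$ if and only if $\Phi_k^-\le\varphi_k\le\Phi_k^+$ for each $k\in[n]$ and $p^-\le p\le p^+$ (pointwise on $Y^n$).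
   Context: $Y$ is a finite distributive lattice identified with a sublattice of $\mathcal{P}(U)$ for a finite set $U$, with least element $0=\emptyset$, greatest element $1=U$, and $\wedge,\vee$ being intersection and union; $\overline{S}=U\setminus S$. For $S\subseteq U$, $\operatorname{cl}(S)=\bigwedge\{y\in Y: y\ge S\}$, $\operatorname{int}(S)=\bigvee\{y\in Y: y\le S\}$. Empty meets equal $U$ and empty joins equal $\emptyset$. $[n]=\{1,\ldots,n\}$; $X_1,\ldots,X_n$ are arbitrary sets with at least two elements, each with two fixed distinct elements $0_{X_k},1_{X_k}$ (written $0,1$). For $\mathbf{x}\in\prod_i X_i$ and $a\in X_k$, $\mathbf{x}_k^a$ is $\mathbf{x}$ with $k$-th component replaced by $a$. For $I\subseteq[n]$, $\widehat{\mathbf{1}}_I$ is the tuple whose $i$-th component is $1_{X_i}$ if $i\in I$ and $0_{X_i}$ otherwise. A map $\varphi_k\colon X_k\to Y$ satisfies the boundary condition if $\varphi_k(0_{X_k})\le\varphi_k(x_k)\le\varphi_k(1_{X_k})$ for all $x_k$. A polynomial function $Y^n\to Y$ is a composition of $\wedge,\vee$ with variables and constants. Condition (BC): $f(\mathbf{x}_k^0)\le f(\mathbf{x})\le f(\mathbf{x}_k^1)$ for all $k$ and $\mathbf{x}$. For $k\in[n]$, $a_k\in X_k$: $$\Phi_k^-(a_k)=\bigvee_{\mathbf{x}:\,x_k=a_k}\operatorname{cl}\big(f(\mathbf{x})\wedge\overline{f(\mathbf{x}_k^0)}\big),\qquad \Phi_k^+(a_k)=\bigwedge_{\mathbf{x}:\,x_k=a_k}\operatorname{int}\big(f(\mathbf{x})\vee\overline{f(\mathbf{x}_k^1)}\big),$$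 ranging over all $\mathbf{x}$ with $k$-th component $a_k$. *)

theory Defs
  imports "HOL-Library.FuncSet"
begin

definition set_lattice :: "'u set \<Rightarrow> 'u set set \<Rightarrow> bool" where
  "set_lattice U Y \<longleftrightarrow> finite U \<and> Y \<subseteq> Pow U \<and> {} \<in> Y \<and> U \<in> Y \<and>
     (\<forall>a\<in>Y. \<forall>b\<in>Y. a \<inter> b \<in> Y \<and> a \<union> b \<in> Y)"

definition cl :: "'u set set \<Rightarrow> 'u set \<Rightarrow> 'u set" where
  "cl Y S = \<Inter>{y\<in>Y. S \<subseteq> y}"

definition intr :: "'u set set \<Rightarrow> 'u set \<Rightarrow> 'u set" where
  "intr Y S = \<Union>{y\<in>Y. y \<subseteq> S}"

inductive_set lat_poly :: "'u set set \<Rightarrow> nat \<Rightarrow> ((nat \<Rightarrow> 'u set) \<Rightarrow> 'u set) set"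
  for Y :: "'u set set" and n :: nat where
  var: "i \<in> {1..n} \<Longrightarrow> (\<lambda>y. y i) \<in> lat_poly Y n"
| const: "c \<in> Y \<Longrightarrow> (\<lambda>y. c) \<in> lat_poly Y n"
| meet: "p \<in> lat_poly Y n \<Longrightarrow> q \<in> lat_poly Y n \<Longrightarrow> (\<lambda>y. p y \<inter> q y) \<in> lat_poly Y n"
| join: "p \<in> lat_poly Y n \<Longrightarrow> q \<in> lat_poly Y n \<Longrightarrow> (\<lambda>y. p y \<union> q y) \<in> lat_poly Y n"

definition is_polynomial :: "'u set set \<Rightarrow> nat \<Rightarrow> ((nat \<Rightarrow> 'u set) \<Rightarrow> 'u set) \<Rightarrow> bool" where
  "is_polynomial Y n p \<longleftrightarrow>
     (\<exists>q\<in>lat_poly Y n. \<forall>y\<in>PiE {1..n} (\<lambda>_. Y). p y = q y)"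

definition hat1 :: "nat \<Rightarrow> (nat \<Rightarrow> 'a) \<Rightarrow> (nat \<Rightarrow> 'a) \<Rightarrow> nat set \<Rightarrow> nat \<Rightarrow> 'a" where
  "hat1 n zero one I = (\<lambda>i. if i \<in> {1..n} then (if i \<in> I then one i else zero i) else undefined)"

text \<open>Phi_k^- (empty join = {}) and Phi_k^+ (empty meet = U).\<close>
definition Phi_minus where
  "Phi_minus U Y n X zero f k a =
     \<Union>{cl Y (f x \<inter> (U - f (x(k := zero k)))) | x. x \<in> PiE {1..n} X \<and> x k = a}"

definition Phi_plus where
  "Phi_plus U Y n X one f k a =
     U \<inter> \<Inter>{intr Y (f x \<union> (U - f (x(k := one k)))) | x. x \<in> PiE {1..n} X \<and> x k = a}"

definition c_minus where
  "c_minus U Y n zero one f a I =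
     cl Y (f (hat1 n zero one I) \<inter> (U \<inter> \<Inter>{U - a i | i. i \<in> {1..n} - I}))"

definition c_plus where
  "c_plus U Y n zero one f b I =
     intr Y (f (hat1 n zero one I) \<union> \<Union>{U - b i | i. i \<in> I})"

definition p_minus where
  "p_minus U Y n zero one f a y =
     \<Union>{c_minus U Y n zero one f a I \<inter> (U \<inter> \<Inter>{y i | i. i \<in> I}) | I. I \<subseteq> {1..n}}"

definition p_plus where
  "p_plus U Y n zero one f b y =
     \<Union>{c_plus U Y n zero one f b I \<inter> (U \<inter> \<Inter>{y i | i. i \<in> I}) | I. I \<subseteq> {1..n}}"

end

theory Submission
  imports Defs
begin

(* Every lattice in sight is a lattice of subsets of U, so all inequalities are checked
   element by element.  Three general tools carry the argument:
   - a polynomial is monotone "at each point u": whether u lies in p(y) depends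
     monotonically on which coordinates y_i contain u;
   - cl and intr are Galois adjoints of the inclusion Y into Pow U, so the bounds
     Phi_k^-, Phi_k^+, c_I^-, c_I^+ can be compared with elements of Y by comparing the
     sets they are hulls/kernels of;
   - a tuple can be moved to another tuple one coordinate at a time.
   Necessity: if f = p o phi, the monotonicity of p at u gives all four bounds.
   Sufficiency: for u in f(x), lowering the coordinates where u notin phi_i(x_i) (via the
   bound Phi^- <= phi) and raising the others (via (BC)) reaches hat-1_I, which places u
   in p^-(phi x) <= p(phi x); symmetrically p(phi x) <= p^+(phi x) <= f(x). *)

section \<open>Closure and interior as Galois adjoints\<close>

lemma cl_ext: "S \<subseteq> cl Y S"
  unfolding cl_def by auto

lemma cl_le_iff: "s \<in> Y \<Longrightarrow> cl Y S \<subseteq> s \<longleftrightarrow> S \<subseteq> s"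
  unfolding cl_def by auto

lemma intr_sub: "intr Y S \<subseteq> S"
  unfolding intr_def by auto

lemma intr_ge_iff: "s \<in> Y \<Longrightarrow> s \<subseteq> intr Y S \<longleftrightarrow> s \<subseteq> S"
  unfolding intr_def by auto

lemma lat_poly_pointwise_mono:
  assumes "q \<in> lat_poly Y n" "\<forall>i\<in>{1..n}. u \<in> y i \<longrightarrow> u \<in> z i" "u \<in> q y"
  shows "u \<in> q z"
  using assms by (induction q rule: lat_poly.induct) auto

lemma lat_poly_range:
  assumes "q \<in> lat_poly Y n" "set_lattice U Y" "y \<in> PiE {1..n} (\<lambda>_. Y)"
  shows "q y \<in> Y"
  using assms by (induction q rule: lat_poly.induct) (auto simp: set_lattice_def)

lemma polynomial_pointwise_mono:
  assumes "is_polynomial Y n p" "y \<in> PiE {1..n} (\<lambda>_. Y)" "z \<in> PiE {1..n} (\<lambda>_. Y)"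
    and "\<forall>i\<in>{1..n}. u \<in> y i \<longrightarrow> u \<in> z i" "u \<in> p y"
  shows "u \<in> p z"
  using assms lat_poly_pointwise_mono unfolding is_polynomial_def by metis

lemma polynomial_range:
  assumes "is_polynomial Y n p" "set_lattice U Y" "y \<in> PiE {1..n} (\<lambda>_. Y)"
  shows "p y \<in> Y"
  using assms lat_poly_range unfolding is_polynomial_def by metis

text \<open>Taking for \<open>I\<close> the coordinates of \<open>y\<close>
  that contain \<open>u\<close>, pointwise monotonicity shows \<open>u \<in> p y \<longleftrightarrow> u \<in> p (char_tuple U n I)\<close>
  for \<open>u \<in> U\<close>; this is how the constants \<open>c\<^sub>I\<^sup>\<plusminus>\<close> enter.\<close>

definition char_tuple :: "'u set \<Rightarrow> nat \<Rightarrow> nat set \<Rightarrow> nat \<Rightarrow> 'u set" where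
  "char_tuple U n I = restrict (\<lambda>i. if i \<in> I then U else {}) {1..n}"

lemma char_tuple_in: "set_lattice U Y \<Longrightarrow> char_tuple U n I \<in> PiE {1..n} (\<lambda>_. Y)"
  unfolding char_tuple_def set_lattice_def by auto

section \<open>Moving a tuple one coordinate at a time\<close>

lemma update_chain:
  assumes "finite K" "K \<subseteq> A" "\<forall>k\<in>K. w k \<in> X k"
    and step: "\<And>k z. k \<in> K \<Longrightarrow> z \<in> PiE A X \<Longrightarrow> z k = x k \<Longrightarrow> P z \<Longrightarrow> P (z(k := w k))"
    and "x \<in> PiE A X" "P x"
  shows "P (\<lambda>i. if i \<in> K then w i else x i)"
  using assms(1-3) step
proof (induction K rule: finite_induct)
  case empty
  then show ?case using \<open>P x\<close> by simp
next
  case (insert k K)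
  let ?z = "\<lambda>i. if i \<in> K then w i else x i"
  have "?z \<in> PiE A X"
    using \<open>x \<in> PiE A X\<close> insert.prems by (auto simp: PiE_def extensional_def Pi_def)
  moreover have "?z k = x k" and "P ?z"
    using insert by auto
  ultimately have "P (?z(k := w k))"
    using insert.prems(3) by blast
  moreover have "?z(k := w k) = (\<lambda>i. if i \<in> insert k K then w i else x i)"
    by auto
  ultimately show ?case by simp
qed

lemma Phi_minus_le_iff:
  assumes "s \<in> Y"
  shows "Phi_minus U Y n X zero f k t \<subseteq> s \<longleftrightarrow>
    (\<forall>x\<in>PiE {1..n} X. x k = t \<longrightarrow> f x \<inter> (U - f (x(k := zero k))) \<subseteq> s)"
  unfolding Phi_minus_def
  by (simp add: setcompr_eq_image SUP_le_iff cl_le_iff[OF assms] Ball_def imp_conjL)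

lemma Phi_plus_ge_iff:
  assumes "s \<in> Y" "s \<subseteq> U"
  shows "s \<subseteq> Phi_plus U Y n X one f k t \<longleftrightarrow>
    (\<forall>x\<in>PiE {1..n} X. x k = t \<longrightarrow> s \<subseteq> f x \<union> (U - f (x(k := one k))))"
  using assms(2) unfolding Phi_plus_def
  by (simp add: setcompr_eq_image le_INF_iff intr_ge_iff[OF assms(1)] Ball_def imp_conjL)

lemma mem_p_minus:
  "u \<in> p_minus U Y n zero one f a y \<longleftrightarrow>
    (\<exists>I\<subseteq>{1..n}. u \<in> c_minus U Y n zero one f a I \<and> u \<in> U \<and> (\<forall>i\<in>I. u \<in> y i))"
  unfolding p_minus_def by (auto simp: setcompr_eq_image)

lemma mem_p_plus:
  "u \<in> p_plus U Y n zero one f b y \<longleftrightarrow>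
    (\<exists>I\<subseteq>{1..n}. u \<in> c_plus U Y n zero one f b I \<and> u \<in> U \<and> (\<forall>i\<in>I. u \<in> y i))"
  unfolding p_plus_def by (auto simp: setcompr_eq_image)

text \<open>The hypotheses shared by both directions; (BC) and the boundary condition on the
  \<open>\<phi>\<^sub>k\<close> are only needed for sufficiency and are assumed where used.\<close>

locale representation_setting =
  fixes U :: "'u set" and Y :: "'u set set" and n :: nat
    and X :: "nat \<Rightarrow> 'a set" and zero one :: "nat \<Rightarrow> 'a"
    and f :: "(nat \<Rightarrow> 'a) \<Rightarrow> 'u set"
    and \<phi> :: "nat \<Rightarrow> 'a \<Rightarrow> 'u set"
    and p :: "(nat \<Rightarrow> 'u set) \<Rightarrow> 'u set"
  assumes Y: "set_lattice U Y"
    and points: "\<And>k. k \<in> {1..n} \<Longrightarrow> zero k \<in> X k \<and> one k \<in> X k"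
    and f_range: "\<And>x. x \<in> PiE {1..n} X \<Longrightarrow> f x \<in> Y"
    and phi_range: "\<And>k t. k \<in> {1..n} \<Longrightarrow> t \<in> X k \<Longrightarrow> \<phi> k t \<in> Y"
    and p_poly: "is_polynomial Y n p"
begin

abbreviation phi_vec :: "(nat \<Rightarrow> 'a) \<Rightarrow> nat \<Rightarrow> 'u set" where
  "phi_vec x \<equiv> restrict (\<lambda>i. \<phi> i (x i)) {1..n}"

abbreviation represents :: bool where
  "represents \<equiv> \<forall>x\<in>PiE {1..n} X. f x = p (phi_vec x)"

lemma Y_subset_U: "s \<in> Y \<Longrightarrow> s \<subseteq> U"
  using Y unfolding set_lattice_def by auto

lemma phi_vec_in: "x \<in> PiE {1..n} X \<Longrightarrow> phi_vec x \<in> PiE {1..n} (\<lambda>_. Y)"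
  using phi_range by (auto simp: PiE_def Pi_def)

lemma hat1_in: "hat1 n zero one I \<in> PiE {1..n} X"
  using points unfolding hat1_def by auto

lemma update_in: "x \<in> PiE {1..n} X \<Longrightarrow> k \<in> {1..n} \<Longrightarrow> t \<in> X k \<Longrightarrow> x(k := t) \<in> PiE {1..n} X"
  by (auto simp: PiE_def extensional_def Pi_def)

subsection \<open>Necessity\<close>

lemma represents_pointwise_mono:
  assumes "represents" "x \<in> PiE {1..n} X" "x' \<in> PiE {1..n} X"
    and "\<forall>i\<in>{1..n}. u \<in> \<phi> i (x i) \<longrightarrow> u \<in> \<phi> i (x' i)" "u \<in> f x"
  shows "u \<in> f x'"
  using polynomial_pointwise_mono[OF p_poly phi_vec_in[OF assms(2)] phi_vec_in[OF assms(3)]]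
    assms by auto

lemma Phi_bounds_of_represents:
  assumes rep: "represents" and k: "k \<in> {1..n}" and t: "t \<in> X k"
  shows "Phi_minus U Y n X zero f k t \<subseteq> \<phi> k t \<and> \<phi> k t \<subseteq> Phi_plus U Y n X one f k t"
proof
  show "Phi_minus U Y n X zero f k t \<subseteq> \<phi> k t"
    unfolding Phi_minus_le_iff[OF phi_range[OF k t]]
  proof (intro ballI impI subsetI)
    fix x u assume x: "x \<in> PiE {1..n} X" "x k = t" and u: "u \<in> f x \<inter> (U - f (x(k := zero k)))"
    have "u \<notin> \<phi> k t \<Longrightarrow> u \<in> f (x(k := zero k))"
      by (rule represents_pointwise_mono[OF rep x(1) update_in[OF x(1)]]) (use u x points k in auto)
    then show "u \<in> \<phi> k t" using u by blast
  qed
  show "\<phi> k t \<subseteq> Phi_plus U Y n X one f k t"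
    unfolding Phi_plus_ge_iff[OF phi_range[OF k t] Y_subset_U[OF phi_range[OF k t]]]
  proof (intro ballI impI subsetI)
    fix x u assume x: "x \<in> PiE {1..n} X" "x k = t" and u: "u \<in> \<phi> k t"
    have "u \<in> f (x(k := one k)) \<Longrightarrow> u \<in> f x"
      by (rule represents_pointwise_mono[OF rep update_in[OF x(1)] x(1)]) (use u x points k in auto)
    then show "u \<in> f x \<union> (U - f (x(k := one k)))"
      using u Y_subset_U[OF phi_range[OF k t]] by blast
  qed
qed

text \<open>\<open>c\<^sub>I\<^sup>-\<close> and \<open>c\<^sub>I\<^sup>+\<close> squeeze the value of \<open>p\<close> at the Boolean tuple of \<open>I\<close>; pointwise
  monotonicity then transfers this to arbitrary arguments.\<close>

lemma p_bounds_of_represents: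
  assumes rep: "represents" and y: "y \<in> PiE {1..n} (\<lambda>_. Y)"
  shows "p_minus U Y n zero one f (\<lambda>i. \<phi> i (zero i)) y \<subseteq> p y
    \<and> p y \<subseteq> p_plus U Y n zero one f (\<lambda>i. \<phi> i (one i)) y"
proof
  let ?e = "char_tuple U n"
  have e_in: "?e I \<in> PiE {1..n} (\<lambda>_. Y)" for I
    using char_tuple_in[OF Y] .
  have pe_in: "p (?e I) \<in> Y" for I
    using polynomial_range[OF p_poly Y e_in] .
  have f_hat1: "f (hat1 n zero one I) = p (phi_vec (hat1 n zero one I))" for I
    using rep hat1_in by blast
  show "p_minus U Y n zero one f (\<lambda>i. \<phi> i (zero i)) y \<subseteq> p y"
  proof
    fix u assume "u \<in> p_minus U Y n zero one f (\<lambda>i. \<phi> i (zero i)) y"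
    then obtain I where I: "I \<subseteq> {1..n}" "\<forall>i\<in>I. u \<in> y i"
      and u: "u \<in> c_minus U Y n zero one f (\<lambda>i. \<phi> i (zero i)) I"
      unfolding mem_p_minus by blast
    have "f (hat1 n zero one I) \<inter> (U \<inter> \<Inter>{U - \<phi> i (zero i) | i. i \<in> {1..n} - I}) \<subseteq> p (?e I)"
    proof
      fix w assume w: "w \<in> f (hat1 n zero one I) \<inter> (U \<inter> \<Inter>{U - \<phi> i (zero i) | i. i \<in> {1..n} - I})"
      have "w \<notin> \<phi> i (zero i)" if "i \<in> {1..n} - I" for i
        using w that by blast
      then have "\<forall>i\<in>{1..n}. w \<in> phi_vec (hat1 n zero one I) i \<longrightarrow> w \<in> ?e I i"
        using w by (auto simp: char_tuple_def hat1_def)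
      moreover have "w \<in> p (phi_vec (hat1 n zero one I))"
        using w f_hat1 by simp
      ultimately show "w \<in> p (?e I)"
        by (rule polynomial_pointwise_mono[OF p_poly phi_vec_in[OF hat1_in] e_in])
    qed
    then have "c_minus U Y n zero one f (\<lambda>i. \<phi> i (zero i)) I \<subseteq> p (?e I)"
      unfolding c_minus_def cl_le_iff[OF pe_in] .
    then have "u \<in> p (?e I)"
      using u by blast
    then show "u \<in> p y"
      by (rule polynomial_pointwise_mono[OF p_poly e_in y, rotated])
         (use I in \<open>auto simp: char_tuple_def\<close>)
  qed
  show "p y \<subseteq> p_plus U Y n zero one f (\<lambda>i. \<phi> i (one i)) y"
  proof
    fix u assume u: "u \<in> p y"
    define I where "I = {i \<in> {1..n}. u \<in> y i}"
    have uU: "u \<in> U"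
      using u Y_subset_U[OF polynomial_range[OF p_poly Y y]] by blast
    have "u \<in> p (?e I)"
      by (rule polynomial_pointwise_mono[OF p_poly y e_in _ u])
         (use uU in \<open>auto simp: char_tuple_def I_def\<close>)
    moreover have "p (?e I) \<subseteq> f (hat1 n zero one I) \<union> \<Union>{U - \<phi> i (one i) | i. i \<in> I}"
    proof
      fix w assume w: "w \<in> p (?e I)"
      have "w \<in> f (hat1 n zero one I)" if "\<forall>i\<in>I. w \<in> \<phi> i (one i)"
      proof -
        have "\<forall>i\<in>{1..n}. w \<in> ?e I i \<longrightarrow> w \<in> phi_vec (hat1 n zero one I) i"
          using that by (auto simp: char_tuple_def hat1_def)
        then have "w \<in> p (phi_vec (hat1 n zero one I))"
          by (rule polynomial_pointwise_mono[OF p_poly e_in phi_vec_in[OF hat1_in] _ w])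
        then show ?thesis
          using f_hat1 by simp
      qed
      then show "w \<in> f (hat1 n zero one I) \<union> \<Union>{U - \<phi> i (one i) | i. i \<in> I}"
        using w Y_subset_U[OF pe_in] by blast
    qed
    then have "p (?e I) \<subseteq> c_plus U Y n zero one f (\<lambda>i. \<phi> i (one i)) I"
      unfolding c_plus_def intr_ge_iff[OF pe_in] .
    ultimately have "u \<in> c_plus U Y n zero one f (\<lambda>i. \<phi> i (one i)) I"
      by blast
    moreover have "I \<subseteq> {1..n}" "\<forall>i\<in>I. u \<in> y i"
      unfolding I_def by auto
    ultimately show "u \<in> p_plus U Y n zero one f (\<lambda>i. \<phi> i (one i)) y"
      unfolding mem_p_plus using uU by blast
  qed
qed

subsection \<open>Sufficiency\<close>

context
  assumes BC: "\<And>k x. k \<in> {1..n} \<Longrightarrow> x \<in> PiE {1..n} X \<Longrightarrow>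
      f (x(k := zero k)) \<subseteq> f x \<and> f x \<subseteq> f (x(k := one k))"
    and phi_bound: "\<And>k t. k \<in> {1..n} \<Longrightarrow> t \<in> X k \<Longrightarrow>
      \<phi> k (zero k) \<subseteq> \<phi> k t \<and> \<phi> k t \<subseteq> \<phi> k (one k)"
    and Phi_bounds: "\<And>k t. k \<in> {1..n} \<Longrightarrow> t \<in> X k \<Longrightarrow>
      Phi_minus U Y n X zero f k t \<subseteq> \<phi> k t \<and> \<phi> k t \<subseteq> Phi_plus U Y n X one f k t"
begin

text \<open>Lowering \<open>z\<^sub>k\<close> to \<open>0\<close> is harmless when
  \<open>u \<notin> \<phi>\<^sub>k(z\<^sub>k)\<close>: otherwise \<open>u\<close> witnesses a jump counted in \<open>\<Phi>\<^sub>k\<^sup>-(z\<^sub>k) \<subseteq> \<phi>\<^sub>k(z\<^sub>k)\<close>.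
  Lowering \<open>z\<^sub>k = 1\<close> to \<open>t\<close> is harmless when \<open>u \<in> \<phi>\<^sub>k(t) \<subseteq> \<Phi>\<^sub>k\<^sup>+(t)\<close>.\<close>

lemma raise_to_one:
  "k \<in> {1..n} \<Longrightarrow> z \<in> PiE {1..n} X \<Longrightarrow> u \<in> f z \<Longrightarrow> u \<in> f (z(k := one k))"
  using BC by blast

lemma raise_from_zero:
  assumes "k \<in> {1..n}" "z \<in> PiE {1..n} X" "z k = zero k" "t \<in> X k" "u \<in> f z"
  shows "u \<in> f (z(k := t))"
proof -
  have "z(k := t, k := zero k) = z"
    using assms(3) by auto
  then show ?thesis
    using BC[OF assms(1) update_in[OF assms(2,1,4)]] assms(5) by auto
qed

lemma lower_to_zero:
  assumes k: "k \<in> {1..n}" and z: "z \<in> PiE {1..n} X" and "u \<in> f z" "u \<notin> \<phi> k (z k)"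
  shows "u \<in> f (z(k := zero k))"
proof -
  have zk: "z k \<in> X k"
    using z k by auto
  then have "Phi_minus U Y n X zero f k (z k) \<subseteq> \<phi> k (z k)"
    using Phi_bounds[OF k] by blast
  then have "\<forall>x\<in>PiE {1..n} X. x k = z k \<longrightarrow> f x \<inter> (U - f (x(k := zero k))) \<subseteq> \<phi> k (z k)"
    unfolding Phi_minus_le_iff[OF phi_range[OF k zk]] .
  then have "f z \<inter> (U - f (z(k := zero k))) \<subseteq> \<phi> k (z k)"
    using z by simp
  then show ?thesis
    using assms(3,4) Y_subset_U[OF f_range[OF z]] by blast
qed

lemma lower_from_one:
  assumes k: "k \<in> {1..n}" and z: "z \<in> PiE {1..n} X" "z k = one k"
    and t: "t \<in> X k" and "u \<in> \<phi> k t" "u \<in> f z"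
  shows "u \<in> f (z(k := t))"
proof -
  have zt: "z(k := t) \<in> PiE {1..n} X" and undo: "z(k := t, k := one k) = z"
    using update_in[OF z(1) k t] z(2) by auto
  have "\<phi> k t \<subseteq> Phi_plus U Y n X one f k t"
    using Phi_bounds[OF k t] by blast
  then have "\<forall>x\<in>PiE {1..n} X. x k = t \<longrightarrow> \<phi> k t \<subseteq> f x \<union> (U - f (x(k := one k)))"
    unfolding Phi_plus_ge_iff[OF phi_range[OF k t] Y_subset_U[OF phi_range[OF k t]]] .
  from bspec[OF this zt]
  have "\<phi> k t \<subseteq> f (z(k := t)) \<union> (U - f (z(k := t, k := one k)))"
    by simp
  then have "\<phi> k t \<subseteq> f (z(k := t)) \<union> (U - f z)"
    unfolding undo .
  then show ?thesis
    using assms(5,6) by blast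
qed

text \<open>From \<open>u \<in> f(x)\<close>, move \<open>x\<close> to \<open>hat1 I\<close>, where \<open>I\<close> collects the coordinates with
  \<open>u \<in> \<phi>\<^sub>i(x\<^sub>i)\<close>; then \<open>u\<close> lies in the term of \<open>p\<^sup>-(\<phi> x)\<close> indexed by \<open>I\<close>.\<close>

lemma f_subset_p_minus:
  assumes x: "x \<in> PiE {1..n} X"
  shows "f x \<subseteq> p_minus U Y n zero one f (\<lambda>i. \<phi> i (zero i)) (phi_vec x)"
proof
  fix u assume u: "u \<in> f x"
  define I where "I = {i \<in> {1..n}. u \<in> \<phi> i (x i)}"
  have "u \<in> f (\<lambda>i. if i \<in> {1..n} then hat1 n zero one I i else x i)"
  proof (rule update_chain[where P = "\<lambda>z. u \<in> f z", OF _ order_refl _ _ x u])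
    fix k z assume k: "k \<in> {1..n}" and z: "z \<in> PiE {1..n} X" "z k = x k" and "u \<in> f z"
    then show "u \<in> f (z(k := hat1 n zero one I k))"
      using raise_to_one lower_to_zero unfolding I_def hat1_def by auto
  qed (use hat1_in in \<open>auto simp: PiE_iff\<close>)
  moreover have "(\<lambda>i. if i \<in> {1..n} then hat1 n zero one I i else x i) = hat1 n zero one I"
    using x unfolding hat1_def by (auto simp: PiE_def extensional_def intro!: ext)
  ultimately have "u \<in> f (hat1 n zero one I)"
    by simp
  moreover have "u \<notin> \<phi> i (zero i)" if "i \<in> {1..n} - I" for i
    using that phi_bound[of i "x i"] PiE_mem[OF x, of i] unfolding I_def by auto
  moreover have uU: "u \<in> U"
    using u Y_subset_U[OF f_range[OF x]] by blast
  ultimately have "u \<in> c_minus U Y n zero one f (\<lambda>i. \<phi> i (zero i)) I"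
    unfolding c_minus_def by (intro subsetD[OF cl_ext]) auto
  moreover have "I \<subseteq> {1..n}" "\<forall>i\<in>I. u \<in> phi_vec x i"
    unfolding I_def by auto
  ultimately show "u \<in> p_minus U Y n zero one f (\<lambda>i. \<phi> i (zero i)) (phi_vec x)"
    unfolding mem_p_minus using uU by blast
qed

text \<open>Dually, if \<open>u \<in> p\<^sup>+(\<phi> x)\<close> through the term indexed by \<open>J\<close>, then \<open>u \<in> f(hat1 J)\<close>,
  and \<open>hat1 J\<close> can be moved back to \<open>x\<close> keeping \<open>u\<close>.\<close>

lemma p_plus_subset_f:
  assumes x: "x \<in> PiE {1..n} X"
  shows "p_plus U Y n zero one f (\<lambda>i. \<phi> i (one i)) (phi_vec x) \<subseteq> f x"
proof
  fix u assume "u \<in> p_plus U Y n zero one f (\<lambda>i. \<phi> i (one i)) (phi_vec x)"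
  then obtain J where J: "J \<subseteq> {1..n}" "\<forall>j\<in>J. u \<in> phi_vec x j"
    and u: "u \<in> c_plus U Y n zero one f (\<lambda>i. \<phi> i (one i)) J"
    unfolding mem_p_plus by blast
  have uJ: "u \<in> \<phi> j (x j)" if "j \<in> J" for j
    using J that by (metis restrict_apply' subsetD)
  have "u \<in> \<phi> j (one j)" if "j \<in> J" for j
    using uJ[OF that] phi_bound[of j "x j"] PiE_mem[OF x, of j] J that by blast
  moreover have "u \<in> f (hat1 n zero one J) \<union> \<Union>{U - \<phi> i (one i) | i. i \<in> J}"
    using u unfolding c_plus_def by (rule subsetD[OF intr_sub])
  ultimately have u_hat1: "u \<in> f (hat1 n zero one J)"
    by auto
  have "u \<in> f (\<lambda>i. if i \<in> {1..n} then x i else hat1 n zero one J i)"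
  proof (rule update_chain[where P = "\<lambda>z. u \<in> f z", OF _ order_refl _ _ hat1_in u_hat1])
    fix k z assume k: "k \<in> {1..n}" and z: "z \<in> PiE {1..n} X" "z k = hat1 n zero one J k"
      and "u \<in> f z"
    moreover have "x k \<in> X k"
      using x k by auto
    ultimately show "u \<in> f (z(k := x k))"
      using uJ lower_from_one raise_from_zero unfolding hat1_def by (cases "k \<in> J") auto
  qed (use x in auto)
  moreover have "(\<lambda>i. if i \<in> {1..n} then x i else hat1 n zero one J i) = x"
    using x unfolding hat1_def by (auto simp: PiE_def extensional_def intro!: ext)
  ultimately show "u \<in> f x"
    by simp
qed

text \<open>Hence \<open>f(x) \<subseteq> p\<^sup>-(\<phi> x) \<subseteq> p(\<phi> x) \<subseteq> p\<^sup>+(\<phi> x) \<subseteq> f(x)\<close>.\<close>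

lemma represents_of_bounds:
  assumes p_bounds: "\<And>y. y \<in> PiE {1..n} (\<lambda>_. Y) \<Longrightarrow>
      p_minus U Y n zero one f (\<lambda>i. \<phi> i (zero i)) y \<subseteq> p y
      \<and> p y \<subseteq> p_plus U Y n zero one f (\<lambda>i. \<phi> i (one i)) y"
  shows "represents"
proof
  fix x assume x: "x \<in> PiE {1..n} X"
  show "f x = p (phi_vec x)"
    using f_subset_p_minus[OF x] p_bounds[OF phi_vec_in[OF x]] p_plus_subset_f[OF x]
    by (meson order_trans subset_antisym)
qed

end

end

theorem mainTheorem9:
  fixes U :: "'u set" and Y :: "'u set set" and n :: nat
    and X :: "nat \<Rightarrow> 'a set" and zero one :: "nat \<Rightarrow> 'a"
    and f :: "(nat \<Rightarrow> 'a) \<Rightarrow> 'u set"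
    and \<phi> :: "nat \<Rightarrow> 'a \<Rightarrow> 'u set"
    and p :: "(nat \<Rightarrow> 'u set) \<Rightarrow> 'u set"
  assumes Y: "set_lattice U Y"
    and X: "\<And>k. k \<in> {1..n} \<Longrightarrow> zero k \<in> X k \<and> one k \<in> X k \<and> zero k \<noteq> one k"
    and f_range: "\<And>x. x \<in> PiE {1..n} X \<Longrightarrow> f x \<in> Y"
    and BC: "\<And>k x. k \<in> {1..n} \<Longrightarrow> x \<in> PiE {1..n} X \<Longrightarrow>
               f (x(k := zero k)) \<subseteq> f x \<and> f x \<subseteq> f (x(k := one k))"
    and phi_range: "\<And>k t. k \<in> {1..n} \<Longrightarrow> t \<in> X k \<Longrightarrow> \<phi> k t \<in> Y"
    and phi_bound: "\<And>k t. k \<in> {1..n} \<Longrightarrow> t \<in> X k \<Longrightarrow>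
               \<phi> k (zero k) \<subseteq> \<phi> k t \<and> \<phi> k t \<subseteq> \<phi> k (one k)"
    and p_poly: "is_polynomial Y n p"
  shows "(\<forall>x\<in>PiE {1..n} X. f x = p (restrict (\<lambda>i. \<phi> i (x i)) {1..n}))
     \<longleftrightarrow>
     ((\<forall>k\<in>{1..n}. \<forall>t\<in>X k.
         Phi_minus U Y n X zero f k t \<subseteq> \<phi> k t \<and> \<phi> k t \<subseteq> Phi_plus U Y n X one f k t)
      \<and> (\<forall>y\<in>PiE {1..n} (\<lambda>_. Y).
         p_minus U Y n zero one f (\<lambda>i. \<phi> i (zero i)) y \<subseteq> p y
         \<and> p y \<subseteq> p_plus U Y n zero one f (\<lambda>i. \<phi> i (one i)) y))"
proof -
  interpret representation_setting U Y n X zero one f \<phi> p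
    by (rule representation_setting.intro) (use Y X f_range phi_range p_poly in auto)
  show ?thesis (is "?rep \<longleftrightarrow> ?Phi_bounds \<and> ?p_bounds")
  proof
    assume rep: ?rep
    show "?Phi_bounds \<and> ?p_bounds"
      using Phi_bounds_of_represents[OF rep] p_bounds_of_represents[OF rep] by blast
  next
    assume "?Phi_bounds \<and> ?p_bounds"
    then show ?rep
      by (intro represents_of_bounds[OF BC phi_bound]) blast+
  qed
qed

end
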